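(* Let $k\ge 1$, let $A,B_1,\dots,B_k,C_1,\dots,C_k\in\mathbb{C}^{r\times r}$ with $C_i+mI$ invertible for all integers $m\ge 0$ and all $i$, and assume $AB_i=B_iA$, $B_iB_j=B_jB_i$, $C_iC_j=C_jC_i$ for all $i,j\in\{1,\dots,k\}$. Let $n\ge 1$ be an integer and suppose $A+mI$ is invertible for all $m\ge 0$. Then $$F_{\mathcal A}[A+nI]=F_{\mathcal A}+\sum_{i=1}^{k} x_iB_i\Big[\sum_{n_1=1}^{n}F_{\mathcal A}[A+n_1I,\,B_i+I,\,C_i+I]\Big]C_i^{-1}.$$ Furthermore, if $A-n_1I$ is invertible for every $0\le n_1\le n$, then $$F_{\mathcal A}[A-nI]=F_{\mathcal A}-\sum_{i=1}^{k} x_iB_i\Big[\sum_{n_1=0}^{n-1}F_{\mathcal A}[A-n_1I,\,B_i+I,\,C_i+I]\Big]C_i^{-1}.$$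
   Context: For $M\in\mathbb{C}^{r\times r}$ the Pochhammer symbol is $(M)_0=I$, $(M)_m=M(M+I)\cdots(M+(m-1)I)$ for $m\ge1$, and $(M)^{-1}_m$ denotes $((M)_m)^{-1}$ (when it exists). The Lauricella matrix function is $$F_{\mathcal A}=F_{\mathcal A}[A,B_1,\dots,B_k;C_1,\dots,C_k;x_1,\dots,x_k]=\sum_{m_1,\dots,m_k\ge0}(A)_{m_1+\cdots+m_k}\prod_{i=1}^k(B_i)_{m_i}\prod_{i=1}^k(C_i)^{-1}_{m_i}\prod_{i=1}^k\frac{x_i^{m_i}}{m_i!},$$ with $x_1,\dots,x_k$ complex (scalar) variables; products of matrices are taken in the written order of increasing $i$. Identities are understood as identities of formal power series in $x_1,\dots,x_k$ with matrix coefficients (hence also wherever the series converge). Notation: $F_{\mathcal A}[A+nI, B_i+I, C_i+I]$ means $F_{\mathcal A}$ with $A$ replaced by $A+nI$, $B_i$ by $B_i+I$, $C_i$ by $C_i+I$, all other parameters and variables unchanged; $F_{\mathcal A}$ alone means the unshifted function. *)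

theory Defs
  imports "HOL-Analysis.Analysis"
begin

type_synonym 'r cmat = "complex ^ 'r ^ 'r"

fun mpoch :: "'r::finite cmat \<Rightarrow> nat \<Rightarrow> 'r cmat" where
  "mpoch M 0 = mat 1"
| "mpoch M (Suc m) = mpoch M m ** (M + real m *\<^sub>R mat 1)"

fun oprod :: "(nat \<Rightarrow> 'r::finite cmat) \<Rightarrow> nat \<Rightarrow> 'r cmat" where
  "oprod f 0 = mat 1"
| "oprod f (Suc k) = oprod f k ** f (Suc k)"

text \<open>Formal power series in x_1..x_k with matrix coefficients are represented by
  their coefficient function on multi-indices m :: nat \<Rightarrow> nat supported in {1..k}
  (the coefficient of x_1^(m 1) ... x_k^(m k)); off-support values are 0.\<close>
definition msupp :: "nat \<Rightarrow> (nat \<Rightarrow> nat) \<Rightarrow> bool" where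
  "msupp k m \<longleftrightarrow> (\<forall>i. i \<notin> {1..k} \<longrightarrow> m i = 0)"

definition lauricellaA ::
  "nat \<Rightarrow> 'r::finite cmat \<Rightarrow> (nat \<Rightarrow> 'r cmat) \<Rightarrow> (nat \<Rightarrow> 'r cmat) \<Rightarrow> (nat \<Rightarrow> nat) \<Rightarrow> 'r cmat" where
  "lauricellaA k A B C m =
     (if msupp k m then
        (1 / real (\<Prod>i\<in>{1..k}. fact (m i))) *\<^sub>R
          (mpoch A (\<Sum>i\<in>{1..k}. m i) ** oprod (\<lambda>i. mpoch (B i) (m i)) k
             ** oprod (\<lambda>i. matrix_inv (mpoch (C i) (m i))) k)
      else 0)"

text \<open>Multiplication of a series by the variable x_i (coefficient shift).\<close>
definition xmul :: "nat \<Rightarrow> ((nat \<Rightarrow> nat) \<Rightarrow> 'r::finite cmat) \<Rightarrow> (nat \<Rightarrow> nat) \<Rightarrow> 'r cmat" where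
  "xmul i S m = (if m i = 0 then 0 else S (m(i := m i - 1)))"

end

theory Submission
  imports Defs
begin

text \<open>
  The identities hold coefficientwise. At a multi-index m with |m| = M, the Pochhammer
  contiguity (A+I)_M - (A)_M = M (A+I)_(M-1) gives F[A+I] - F = (M/m!) (A+I)_(M-1) (B)_m (C)_m^-1.
  Splitting M = m_1 + ... + m_k, the i-th share is the coefficient of x_i B_i F[A+I, B_i+I, C_i+I] C_i^-1,
  because (B_i)_(m_i) = B_i (B_i+I)_(m_i-1) and (C_i)_(m_i)^-1 = (C_i+I)_(m_i-1)^-1 C_i^-1, and the
  commutativity hypotheses let B_i and C_i^-1 travel to the ends of the ordered products.
  Telescoping this contiguous relation over n unit shifts of A gives both formulas.
\<close>

lemma matrix_add_rdistrib:
  fixes A B :: "'a::semiring_1^'n^'m"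
  shows "(A + B) ** C = A ** C + B ** C"
  by (vector matrix_matrix_mult_def sum.distrib[symmetric] field_simps)

lemma matrix_diff_ldistrib:
  fixes A :: "'a::ring_1^'n^'m"
  shows "A ** (B - C) = A ** B - A ** C"
  by (vector matrix_matrix_mult_def sum_subtractf[symmetric] field_simps)

lemma matrix_diff_rdistrib:
  fixes A B :: "'a::ring_1^'n^'m"
  shows "(A - B) ** C = A ** C - B ** C"
  by (vector matrix_matrix_mult_def sum_subtractf[symmetric] field_simps)

lemma matrix_sum_ldistrib:
  fixes A :: "'a::semiring_1^'n^'m"
  shows "A ** sum f S = (\<Sum>s\<in>S. A ** f s)"
  by (induction S rule: infinite_finite_induct) (auto simp: matrix_add_ldistrib)

lemma matrix_sum_rdistrib:
  fixes f :: "'b \<Rightarrow> 'a::semiring_1^'n^'m"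
  shows "sum f S ** A = (\<Sum>s\<in>S. f s ** A)"
  by (induction S rule: infinite_finite_induct) (auto simp: matrix_add_rdistrib)

lemma scaleR_mat_1_mult:
  fixes A :: "'a::real_algebra_1^'n^'m"
  shows "(c *\<^sub>R mat 1) ** A = c *\<^sub>R A"
  by (metis scalar_matrix_assoc matrix_mul_lid)

lemma mult_scaleR_mat_1:
  fixes A :: "'a::real_algebra_1^'n^'m"
  shows "A ** (c *\<^sub>R mat 1) = c *\<^sub>R A"
  by (metis matrix_scalar_ac matrix_mul_rid)

lemma commute_add_scalar:
  fixes X Y :: "'a::real_algebra_1^'n^'n"
  assumes "X ** Y = Y ** X"
  shows "X ** (Y + c *\<^sub>R mat 1) = (Y + c *\<^sub>R mat 1) ** X"
  using assms
  by (simp add: matrix_add_ldistrib matrix_add_rdistrib scaleR_mat_1_mult mult_scaleR_mat_1)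

lemma commute_diff_scalar:
  fixes X Y :: "'a::real_algebra_1^'n^'n"
  assumes "X ** Y = Y ** X"
  shows "X ** (Y - c *\<^sub>R mat 1) = (Y - c *\<^sub>R mat 1) ** X"
  using assms
  by (simp add: matrix_diff_ldistrib matrix_diff_rdistrib scaleR_mat_1_mult mult_scaleR_mat_1)

lemma commute_add_one:
  fixes X Y :: "'a::real_algebra_1^'n^'n"
  assumes "X ** Y = Y ** X"
  shows "X ** (Y + mat 1) = (Y + mat 1) ** X"
  using commute_add_scalar[OF assms, of 1] by simp

lemma matrix_inv_inverse:
  assumes "invertible A"
  shows "A ** matrix_inv A = mat 1" "matrix_inv A ** A = mat 1"
  using someI_ex[OF assms[unfolded invertible_def]] by (simp_all add: matrix_inv_def)

lemma matrix_inv_unique: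
  fixes A :: "'a::field^'n^'n"
  assumes "A ** A' = mat 1"
  shows "matrix_inv A = A'"
proof -
  have "invertible A"
    using assms matrix_left_right_inverse unfolding invertible_def by blast
  then have "matrix_inv A = (matrix_inv A ** A) ** A'"
    by (metis assms matrix_mul_assoc matrix_mul_rid)
  then show ?thesis
    using matrix_inv_inverse(2)[OF \<open>invertible A\<close>] by simp
qed

lemma matrix_inv_mult:
  fixes A B :: "'a::field^'n^'n"
  assumes "invertible A" "invertible B"
  shows "matrix_inv (A ** B) = matrix_inv B ** matrix_inv A"
proof (rule matrix_inv_unique)
  have "A ** B ** (matrix_inv B ** matrix_inv A) = A ** (B ** matrix_inv B) ** matrix_inv A"
    by (simp add: matrix_mul_assoc)
  then show "A ** B ** (matrix_inv B ** matrix_inv A) = mat 1"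
    using matrix_inv_inverse[OF assms(1)] matrix_inv_inverse[OF assms(2)] by simp
qed

lemma matrix_inv_commute:
  fixes A B :: "'a::field^'n^'n"
  assumes "invertible A" "invertible B" "A ** B = B ** A"
  shows "matrix_inv A ** matrix_inv B = matrix_inv B ** matrix_inv A"
  using matrix_inv_mult[OF assms(1,2)] matrix_inv_mult[OF assms(2,1)] assms(3) by simp

lemma mpoch_commute:
  fixes X Y :: "'r::finite cmat"
  assumes "X ** Y = Y ** X"
  shows "X ** mpoch Y n = mpoch Y n ** X"
proof (induction n)
  case 0
  then show ?case by simp
next
  case (Suc n)
  have "X ** mpoch Y (Suc n) = (X ** mpoch Y n) ** (Y + real n *\<^sub>R mat 1)"
    by (simp add: matrix_mul_assoc)
  also have "\<dots> = mpoch Y n ** (X ** (Y + real n *\<^sub>R mat 1))"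
    using Suc by (simp add: matrix_mul_assoc)
  also have "\<dots> = mpoch Y (Suc n) ** X"
    using commute_add_scalar[OF assms] by (simp add: matrix_mul_assoc)
  finally show ?case .
qed

lemma mpoch_Suc_left:
  fixes X :: "'r::finite cmat"
  shows "mpoch X (Suc n) = X ** mpoch (X + mat 1) n"
proof (induction n)
  case 0
  then show ?case by simp
next
  case (Suc n)
  have "X + real (Suc n) *\<^sub>R mat 1 = X + mat 1 + real n *\<^sub>R mat 1"
    by (simp add: scaleR_left_distrib algebra_simps)
  with Suc show ?case
    by (simp only: mpoch.simps) (simp add: matrix_mul_assoc)
qed

lemma mpoch_add_one_diff:
  fixes X :: "'r::finite cmat"
  shows "mpoch (X + mat 1) M - mpoch X M = real M *\<^sub>R mpoch (X + mat 1) (M - 1)"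
proof (cases M)
  case 0
  then show ?thesis by simp
next
  case (Suc N)
  have "X ** mpoch (X + mat 1) N = mpoch (X + mat 1) N ** X"
    by (rule mpoch_commute[OF commute_add_one]) simp
  then have "mpoch (X + mat 1) M - mpoch X M
      = mpoch (X + mat 1) N ** (X + mat 1 + real N *\<^sub>R mat 1) - mpoch (X + mat 1) N ** X"
    using Suc by (simp only: mpoch.simps(2)[of "X + mat 1"] mpoch_Suc_left[of X])
  also have "\<dots> = mpoch (X + mat 1) N ** (real M *\<^sub>R mat 1)"
    using Suc by (simp add: matrix_diff_ldistrib[symmetric] scaleR_left_distrib algebra_simps)
  finally show ?thesis
    using Suc by (simp add: mult_scaleR_mat_1)
qed

lemma invertible_mpoch:
  fixes X :: "'r::finite cmat"
  assumes "\<And>q. invertible (X + real q *\<^sub>R mat 1)"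
  shows "invertible (mpoch X n)"
proof (induction n)
  case 0
  have "invertible (mat 1 :: 'r cmat)"
    unfolding invertible_def by (intro exI[of _ "mat 1"]) simp
  then show ?case by simp
next
  case (Suc n)
  then show ?case using invertible_mult[OF Suc.IH assms] by simp
qed

lemma oprod_cong:
  "(\<And>j. j \<in> {1..k} \<Longrightarrow> f j = g j) \<Longrightarrow> oprod f k = oprod g k"
  by (induction k) auto

lemma oprod_commute:
  fixes X :: "'r::finite cmat"
  assumes "\<And>j. j \<in> {1..k} \<Longrightarrow> X ** f j = f j ** X"
  shows "X ** oprod f k = oprod f k ** X"
  using assms
proof (induction k)
  case 0
  then show ?case by simp
next
  case (Suc k)
  then have "X ** oprod f k = oprod f k ** X" "X ** f (Suc k) = f (Suc k) ** X"
    by auto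
  then show ?case
    by (simp add: matrix_mul_assoc) (metis matrix_mul_assoc)
qed

lemma oprod_mult_left_at:
  fixes X :: "'r::finite cmat"
  assumes "i \<in> {1..k}" "\<And>j. j \<in> {1..k} \<Longrightarrow> X ** f j = f j ** X"
    and "g i = X ** f i" "\<And>j. j \<in> {1..k} \<Longrightarrow> j \<noteq> i \<Longrightarrow> g j = f j"
  shows "X ** oprod f k = oprod g k"
  using assms
proof (induction k)
  case 0
  then show ?case by simp
next
  case (Suc k)
  show ?case
  proof (cases "i = Suc k")
    case True
    have "oprod g k = oprod f k"
      by (rule oprod_cong) (use True Suc.prems in auto)
    moreover have "X ** oprod f k = oprod f k ** X"
      by (rule oprod_commute) (use Suc.prems in auto)
    moreover have "g (Suc k) = X ** f (Suc k)"
      using True Suc.prems(3) by simp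
    ultimately show ?thesis
      by (simp add: matrix_mul_assoc)
  next
    case False
    have "X ** oprod f k = oprod g k"
      by (rule Suc.IH) (use Suc.prems False in auto)
    moreover have "g (Suc k) = f (Suc k)"
      using Suc.prems False by auto
    ultimately show ?thesis
      by (simp add: matrix_mul_assoc)
  qed
qed

lemma oprod_mult_right_at:
  fixes Y :: "'r::finite cmat"
  assumes "i \<in> {1..k}" "\<And>j. j \<in> {1..k} \<Longrightarrow> Y ** f j = f j ** Y"
    and "g i = f i ** Y" "\<And>j. j \<in> {1..k} \<Longrightarrow> j \<noteq> i \<Longrightarrow> g j = f j"
  shows "oprod f k ** Y = oprod g k"
  using assms
proof (induction k)
  case 0
  then show ?case by simp
next
  case (Suc k)
  show ?case
  proof (cases "i = Suc k")
    case True
    have "oprod g k = oprod f k"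
      by (rule oprod_cong) (use True Suc.prems in auto)
    moreover have "g (Suc k) = f (Suc k) ** Y"
      using True Suc.prems(3) by simp
    ultimately show ?thesis
      by (simp add: matrix_mul_assoc)
  next
    case False
    have "oprod f k ** Y = oprod g k"
      by (rule Suc.IH) (use Suc.prems False in auto)
    moreover have "Y ** f (Suc k) = f (Suc k) ** Y" "g (Suc k) = f (Suc k)"
      using Suc.prems False by auto
    ultimately show ?thesis
      by (simp add: matrix_mul_assoc) (metis matrix_mul_assoc)
  qed
qed

lemma oprod_mpoch_raise:
  fixes B :: "nat \<Rightarrow> 'r::finite cmat"
  assumes i: "i \<in> {1..k}" and mi: "m i = Suc l"
    and BB: "\<And>j. j \<in> {1..k} \<Longrightarrow> B i ** B j = B j ** B i"
  shows "B i ** oprod (\<lambda>j. mpoch ((B(i := B i + mat 1)) j) ((m(i := l)) j)) k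
       = oprod (\<lambda>j. mpoch (B j) (m j)) k"
proof (rule oprod_mult_left_at[OF i])
  fix j assume j: "j \<in> {1..k}"
  have "B i ** (B(i := B i + mat 1)) j = (B(i := B i + mat 1)) j ** B i"
    using BB[OF j] by (cases "j = i") (simp_all add: commute_add_one)
  then show "B i ** mpoch ((B(i := B i + mat 1)) j) ((m(i := l)) j)
           = mpoch ((B(i := B i + mat 1)) j) ((m(i := l)) j) ** B i"
    by (rule mpoch_commute)
qed (simp_all add: mi mpoch_Suc_left del: mpoch.simps(2))

lemma oprod_inv_mpoch_raise:
  fixes C :: "nat \<Rightarrow> 'r::finite cmat"
  assumes i: "i \<in> {1..k}" and mi: "m i = Suc l"
    and CC: "\<And>j. j \<in> {1..k} \<Longrightarrow> C i ** C j = C j ** C i"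
    and Cinv: "\<And>j q. j \<in> {1..k} \<Longrightarrow> invertible (C j + real q *\<^sub>R mat 1)"
  shows "oprod (\<lambda>j. matrix_inv (mpoch ((C(i := C i + mat 1)) j) ((m(i := l)) j))) k ** matrix_inv (C i)
       = oprod (\<lambda>j. matrix_inv (mpoch (C j) (m j))) k"
proof -
  let ?C' = "C(i := C i + mat 1)"
  have inv_C: "invertible (C i)"
    using Cinv[OF i, of 0] by simp
  have inv_C': "invertible (mpoch (?C' j) q)" if j: "j \<in> {1..k}" for j q
  proof (rule invertible_mpoch)
    fix p
    have "?C' j + real p *\<^sub>R mat 1 = C j + real (if j = i then Suc p else p) *\<^sub>R mat 1"
      by (cases "j = i") (simp_all add: scaleR_left_distrib algebra_simps)
    then show "invertible (?C' j + real p *\<^sub>R mat 1)"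
      using Cinv[OF j] by simp
  qed
  show ?thesis
  proof (rule oprod_mult_right_at[OF i])
    fix j assume j: "j \<in> {1..k}"
    have "C i ** ?C' j = ?C' j ** C i"
      using CC[OF j] by (cases "j = i") (simp_all add: commute_add_one)
    then show "matrix_inv (C i) ** matrix_inv (mpoch (?C' j) ((m(i := l)) j))
             = matrix_inv (mpoch (?C' j) ((m(i := l)) j)) ** matrix_inv (C i)"
      by (intro matrix_inv_commute inv_C inv_C' j mpoch_commute)
  next
    show "matrix_inv (mpoch (C i) (m i))
        = matrix_inv (mpoch (?C' i) ((m(i := l)) i)) ** matrix_inv (C i)"
      using matrix_inv_mult[OF inv_C inv_C'[OF i]] by (simp add: mi mpoch_Suc_left del: mpoch.simps(2))
  qed simp
qed

lemma sum_fun_upd_Suc: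
  fixes m :: "'a \<Rightarrow> nat"
  assumes "finite I" "i \<in> I" "m i = Suc l"
  shows "(\<Sum>j\<in>I. (m(i := l)) j) = (\<Sum>j\<in>I. m j) - 1"
  using assms by (simp add: sum.remove[OF assms(1,2)] sum.remove[OF assms(1,2), of "m(i := l)"])

lemma prod_fact_fun_upd_Suc:
  fixes m :: "'a \<Rightarrow> nat"
  assumes "finite I" "i \<in> I" "m i = Suc l"
  shows "real (m i) * real (\<Prod>j\<in>I. fact ((m(i := l)) j)) = real (\<Prod>j\<in>I. fact (m j))"
  using assms
  by (simp add: prod.remove[OF assms(1,2)] prod.remove[OF assms(1,2), of "\<lambda>j. fact ((m(i := l)) j)"]
      algebra_simps)

lemma xmul_lauricellaA_nonsupp:
  assumes "\<not> msupp k m" "i \<in> {1..k}"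
  shows "xmul i (\<lambda>m'. X ** lauricellaA k A B C m' ** Y) m = 0"
proof (cases "m i = 0")
  case False
  have "\<not> msupp k (m(i := m i - 1))"
    using assms unfolding msupp_def by auto
  with False show ?thesis
    by (simp add: xmul_def lauricellaA_def)
qed (simp add: xmul_def)

lemma xmul_lauricellaA_raised:
  fixes A :: "'r::finite cmat" and B C :: "nat \<Rightarrow> 'r cmat"
  assumes i: "i \<in> {1..k}" and m: "msupp k m"
    and Cinv: "\<And>j q. j \<in> {1..k} \<Longrightarrow> invertible (C j + real q *\<^sub>R mat 1)"
    and AB: "A ** B i = B i ** A"
    and BB: "\<And>j. j \<in> {1..k} \<Longrightarrow> B i ** B j = B j ** B i"
    and CC: "\<And>j. j \<in> {1..k} \<Longrightarrow> C i ** C j = C j ** C i"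
  shows "xmul i (\<lambda>m'. B i ** lauricellaA k A (B(i := B i + mat 1)) (C(i := C i + mat 1)) m'
                        ** matrix_inv (C i)) m
       = (real (m i) / real (\<Prod>j\<in>{1..k}. fact (m j))) *\<^sub>R
           (mpoch A ((\<Sum>j\<in>{1..k}. m j) - 1) ** oprod (\<lambda>j. mpoch (B j) (m j)) k
              ** oprod (\<lambda>j. matrix_inv (mpoch (C j) (m j))) k)"
proof (cases "m i")
  case (Suc l)
  define P where "P = mpoch A ((\<Sum>j\<in>{1..k}. m j) - 1)"
  define PB' where "PB' = oprod (\<lambda>j. mpoch ((B(i := B i + mat 1)) j) ((m(i := l)) j)) k"
  define PC' where
    "PC' = oprod (\<lambda>j. matrix_inv (mpoch ((C(i := C i + mat 1)) j) ((m(i := l)) j))) k"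
  define c where "c = real (m i) / real (\<Prod>j\<in>{1..k}. fact (m j))"
  have "msupp k (m(i := l))"
    using m i unfolding msupp_def by auto
  moreover have "1 / real (\<Prod>j\<in>{1..k}. fact ((m(i := l)) j)) = c"
    unfolding c_def
    by (subst prod_fact_fun_upd_Suc[where I = "{1..k}" and i = i and m = m, OF _ i Suc, symmetric])
      (simp_all add: Suc)
  moreover have "(\<Sum>j\<in>{1..k}. (m(i := l)) j) = (\<Sum>j\<in>{1..k}. m j) - 1"
    by (rule sum_fun_upd_Suc) (use i Suc in auto)
  ultimately have coeff:
    "lauricellaA k A (B(i := B i + mat 1)) (C(i := C i + mat 1)) (m(i := l)) = c *\<^sub>R (P ** PB' ** PC')"
    unfolding lauricellaA_def P_def PB'_def PC'_def by (simp del: fun_upd_apply)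
  have "xmul i (\<lambda>m'. B i ** lauricellaA k A (B(i := B i + mat 1)) (C(i := C i + mat 1)) m'
                        ** matrix_inv (C i)) m
      = c *\<^sub>R (B i ** (P ** PB' ** PC') ** matrix_inv (C i))"
    using Suc by (simp add: xmul_def coeff matrix_scalar_ac scalar_matrix_assoc[symmetric])
  also have "B i ** (P ** PB' ** PC') ** matrix_inv (C i)
           = P ** (B i ** PB') ** (PC' ** matrix_inv (C i))"
    using mpoch_commute[OF AB[symmetric]] by (simp add: P_def matrix_mul_assoc)
  finally show ?thesis
    unfolding PB'_def PC'_def c_def P_def
    by (simp only: oprod_mpoch_raise[where m = m and B = B, OF i Suc BB]
        oprod_inv_mpoch_raise[where m = m and C = C, OF i Suc CC Cinv])
qed (simp add: xmul_def)

lemma lauricellaA_contiguous_A: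
  fixes A :: "'r::finite cmat" and B C :: "nat \<Rightarrow> 'r cmat"
  assumes Cinv: "\<And>i m. i \<in> {1..k} \<Longrightarrow> invertible (C i + real m *\<^sub>R mat 1)"
    and AB: "\<And>i. i \<in> {1..k} \<Longrightarrow> A ** B i = B i ** A"
    and BB: "\<And>i j. i \<in> {1..k} \<Longrightarrow> j \<in> {1..k} \<Longrightarrow> B i ** B j = B j ** B i"
    and CC: "\<And>i j. i \<in> {1..k} \<Longrightarrow> j \<in> {1..k} \<Longrightarrow> C i ** C j = C j ** C i"
  shows "lauricellaA k (A + mat 1) B C m = lauricellaA k A B C m
     + (\<Sum>i=1..k. xmul i (\<lambda>m'. B i ** lauricellaA k (A + mat 1) (B(i := B i + mat 1))
          (C(i := C i + mat 1)) m' ** matrix_inv (C i)) m)"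
proof (cases "msupp k m")
  case False
  have "(\<Sum>i=1..k. xmul i (\<lambda>m'. B i ** lauricellaA k (A + mat 1) (B(i := B i + mat 1))
          (C(i := C i + mat 1)) m' ** matrix_inv (C i)) m) = 0"
    by (rule sum.neutral) (use False xmul_lauricellaA_nonsupp in blast)
  with False show ?thesis
    by (simp add: lauricellaA_def)
next
  case True
  define M where "M = (\<Sum>j\<in>{1..k}. m j)"
  define fac where "fac = real (\<Prod>j\<in>{1..k}. fact (m j))"
  define PB where "PB = oprod (\<lambda>j. mpoch (B j) (m j)) k"
  define PC where "PC = oprod (\<lambda>j. matrix_inv (mpoch (C j) (m j))) k"
  have "(\<Sum>i=1..k. xmul i (\<lambda>m'. B i ** lauricellaA k (A + mat 1) (B(i := B i + mat 1))
          (C(i := C i + mat 1)) m' ** matrix_inv (C i)) m)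
      = (\<Sum>i=1..k. (real (m i) / fac) *\<^sub>R (mpoch (A + mat 1) (M - 1) ** PB ** PC))"
  proof (rule sum.cong)
    fix i assume i: "i \<in> {1..k}"
    have "(A + mat 1) ** B i = B i ** (A + mat 1)"
      using commute_add_one[OF AB[OF i, symmetric]] by simp
    from xmul_lauricellaA_raised[where A = "A + mat 1" and B = B and C = C,
        OF i True Cinv this BB[OF i] CC[OF i]]
    show "xmul i (\<lambda>m'. B i ** lauricellaA k (A + mat 1) (B(i := B i + mat 1))
          (C(i := C i + mat 1)) m' ** matrix_inv (C i)) m
        = (real (m i) / fac) *\<^sub>R (mpoch (A + mat 1) (M - 1) ** PB ** PC)"
      unfolding M_def fac_def PB_def PC_def .
  qed simp
  also have "\<dots> = (real M / fac) *\<^sub>R (mpoch (A + mat 1) (M - 1) ** PB ** PC)"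
    by (simp add: M_def scaleR_sum_left[symmetric] sum_divide_distrib[symmetric])
  also have "\<dots> = (1 / fac) *\<^sub>R ((mpoch (A + mat 1) M - mpoch A M) ** PB ** PC)"
    by (simp add: mpoch_add_one_diff scalar_matrix_assoc[symmetric])
  also have "\<dots> = lauricellaA k (A + mat 1) B C m - lauricellaA k A B C m"
    using True
    by (simp add: lauricellaA_def M_def fac_def PB_def PC_def matrix_diff_rdistrib scaleR_diff_right)
  finally show ?thesis
    by simp
qed

lemma sum_xmul_sum:
  fixes F :: "'b \<Rightarrow> nat \<Rightarrow> (nat \<Rightarrow> nat) \<Rightarrow> 'r::finite cmat" and X Y :: "nat \<Rightarrow> 'r cmat"
  shows "(\<Sum>i\<in>I. xmul i (\<lambda>m'. X i ** (\<Sum>n\<in>S. F n i m') ** Y i) m)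
       = (\<Sum>n\<in>S. \<Sum>i\<in>I. xmul i (\<lambda>m'. X i ** F n i m' ** Y i) m)"
proof -
  have "xmul i (\<lambda>m'. X i ** (\<Sum>n\<in>S. F n i m') ** Y i) m
      = (\<Sum>n\<in>S. xmul i (\<lambda>m'. X i ** F n i m' ** Y i) m)" for i
    by (simp add: xmul_def matrix_sum_ldistrib matrix_sum_rdistrib)
  then show ?thesis
    by (simp add: sum.swap[of _ I S])
qed

lemma lauricellaA_shift_up:
  fixes A :: "'r::finite cmat" and B C :: "nat \<Rightarrow> 'r cmat"
  assumes Cinv: "\<And>i m. i \<in> {1..k} \<Longrightarrow> invertible (C i + real m *\<^sub>R mat 1)"
    and AB: "\<And>i. i \<in> {1..k} \<Longrightarrow> A ** B i = B i ** A"
    and BB: "\<And>i j. i \<in> {1..k} \<Longrightarrow> j \<in> {1..k} \<Longrightarrow> B i ** B j = B j ** B i"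
    and CC: "\<And>i j. i \<in> {1..k} \<Longrightarrow> j \<in> {1..k} \<Longrightarrow> C i ** C j = C j ** C i"
  shows "lauricellaA k (A + real n *\<^sub>R mat 1) B C m = lauricellaA k A B C m
     + (\<Sum>i=1..k. xmul i (\<lambda>m'. B i **
          (\<Sum>n1=1..n. lauricellaA k (A + real n1 *\<^sub>R mat 1) (B(i := B i + mat 1))
             (C(i := C i + mat 1)) m') ** matrix_inv (C i)) m)"
  unfolding sum_xmul_sum
proof (induction n arbitrary: m)
  case 0
  then show ?case by simp
next
  case (Suc n)
  have "A + real (Suc n) *\<^sub>R mat 1 = (A + real n *\<^sub>R mat 1) + mat 1"
    by (simp add: scaleR_left_distrib algebra_simps)
  moreover have "lauricellaA k ((A + real n *\<^sub>R mat 1) + mat 1) B C m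
     = lauricellaA k (A + real n *\<^sub>R mat 1) B C m
     + (\<Sum>i=1..k. xmul i (\<lambda>m'. B i ** lauricellaA k ((A + real n *\<^sub>R mat 1) + mat 1)
          (B(i := B i + mat 1)) (C(i := C i + mat 1)) m' ** matrix_inv (C i)) m)"
  proof (rule lauricellaA_contiguous_A[OF Cinv _ BB CC])
    fix i assume "i \<in> {1..k}"
    then show "(A + real n *\<^sub>R mat 1) ** B i = B i ** (A + real n *\<^sub>R mat 1)"
      using commute_add_scalar[OF AB[symmetric]] by simp
  qed auto
  ultimately show ?case
    using Suc.IH by (simp del: fun_upd_apply add: atLeastAtMostSuc_conv algebra_simps)
qed

lemma lauricellaA_shift_down:
  fixes A :: "'r::finite cmat" and B C :: "nat \<Rightarrow> 'r cmat"
  assumes Cinv: "\<And>i m. i \<in> {1..k} \<Longrightarrow> invertible (C i + real m *\<^sub>R mat 1)"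
    and AB: "\<And>i. i \<in> {1..k} \<Longrightarrow> A ** B i = B i ** A"
    and BB: "\<And>i j. i \<in> {1..k} \<Longrightarrow> j \<in> {1..k} \<Longrightarrow> B i ** B j = B j ** B i"
    and CC: "\<And>i j. i \<in> {1..k} \<Longrightarrow> j \<in> {1..k} \<Longrightarrow> C i ** C j = C j ** C i"
  shows "lauricellaA k (A - real n *\<^sub>R mat 1) B C m = lauricellaA k A B C m
     - (\<Sum>i=1..k. xmul i (\<lambda>m'. B i **
          (\<Sum>n1<n. lauricellaA k (A - real n1 *\<^sub>R mat 1) (B(i := B i + mat 1))
             (C(i := C i + mat 1)) m') ** matrix_inv (C i)) m)"
  unfolding sum_xmul_sum
proof (induction n arbitrary: m)
  case 0
  then show ?case by simp
next
  case (Suc n)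
  have "A - real n *\<^sub>R mat 1 = (A - real (Suc n) *\<^sub>R mat 1) + mat 1"
    by (simp add: scaleR_left_distrib algebra_simps)
  moreover have "lauricellaA k ((A - real (Suc n) *\<^sub>R mat 1) + mat 1) B C m
     = lauricellaA k (A - real (Suc n) *\<^sub>R mat 1) B C m
     + (\<Sum>i=1..k. xmul i (\<lambda>m'. B i ** lauricellaA k ((A - real (Suc n) *\<^sub>R mat 1) + mat 1)
          (B(i := B i + mat 1)) (C(i := C i + mat 1)) m' ** matrix_inv (C i)) m)"
  proof (rule lauricellaA_contiguous_A[OF Cinv _ BB CC])
    fix i assume "i \<in> {1..k}"
    then show "(A - real (Suc n) *\<^sub>R mat 1) ** B i = B i ** (A - real (Suc n) *\<^sub>R mat 1)"
      using commute_diff_scalar[OF AB[symmetric]] by simp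
  qed auto
  ultimately show ?case
    using Suc.IH[of m] by (simp del: fun_upd_apply add: algebra_simps)
qed

theorem mainTheorem1:
  fixes k n :: nat and A :: "'r::finite cmat" and B C :: "nat \<Rightarrow> 'r cmat"
  assumes "k \<ge> 1"
    and "\<And>i m. i \<in> {1..k} \<Longrightarrow> invertible (C i + real m *\<^sub>R mat 1)"
    and "\<And>i. i \<in> {1..k} \<Longrightarrow> A ** B i = B i ** A"
    and "\<And>i j. i \<in> {1..k} \<Longrightarrow> j \<in> {1..k} \<Longrightarrow> B i ** B j = B j ** B i"
    and "\<And>i j. i \<in> {1..k} \<Longrightarrow> j \<in> {1..k} \<Longrightarrow> C i ** C j = C j ** C i"
    and "n \<ge> 1"
    and "\<And>m. invertible (A + real m *\<^sub>R mat 1)"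
  shows "(\<forall>m. lauricellaA k (A + real n *\<^sub>R mat 1) B C m =
            lauricellaA k A B C m
            + (\<Sum>i=1..k. xmul i (\<lambda>m'. B i **
                 (\<Sum>n1=1..n. lauricellaA k (A + real n1 *\<^sub>R mat 1)
                     (B(i := B i + mat 1)) (C(i := C i + mat 1)) m')
                 ** matrix_inv (C i)) m))
       \<and> ((\<forall>n1\<le>n. invertible (A - real n1 *\<^sub>R mat 1)) \<longrightarrow>
          (\<forall>m. lauricellaA k (A - real n *\<^sub>R mat 1) B C m =
            lauricellaA k A B C m
            - (\<Sum>i=1..k. xmul i (\<lambda>m'. B i **
                 (\<Sum>n1=0..n-1. lauricellaA k (A - real n1 *\<^sub>R mat 1)
                     (B(i := B i + mat 1)) (C(i := C i + mat 1)) m')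
                 ** matrix_inv (C i)) m)))"
proof -
  have "{0..n-1} = {..<n}"
    using \<open>n \<ge> 1\<close> by auto
  then show ?thesis
    using lauricellaA_shift_up[OF assms(2-5)] lauricellaA_shift_down[OF assms(2-5)] by simp
qed

end
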